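(* Let $P_n$ be a random school choice problem of size $n$, let $\epsilon\in(0,1)$ and $L>0$ be constants, and let $I_0\subseteq I$ and $S_1\subseteq S$ be fixed (deterministic) subsets with $|I_0|\ge \epsilon n$ and $|S_1|\ge\epsilon n$. Then the probability of the event that the students in $I_0$ together make at least $Ln$ applications during DA and no student in $I_0$ ever applies to any school in $S_1$ during DA is at most $(1-\epsilon)^{Ln}$.
   Context: A random school choice problem $P_n$ of size $n$ has a set $I$ of $n$ students and a set $S$ of $n$ schools, each with quota 1; each student's strict preference over $S$ and each school's strict priority over $I$ are uniformly random linear orders, all mutually independent. The student-proposing deferred acceptance (DA) algorithm: in each round every student not tentatively held applies to her most preferred school that has not yet rejected her; each school tentatively holds its highest-priority applicant and rejects the others; stop when a round has no new rejection. Student $i$ applies to school $s$ during DA if at some round she proposes to $s$; the number of applications a student makes is the number of schools she applies to. *)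

theory Defs
  imports Complex_Main "HOL-Library.FuncSet"
begin

text \<open>Students and schools are both the index set {0..<n}.
  A strict linear order on {0..<n} is represented by a bijection of {0..<n}
  (extensional, so that the set of all of them is finite).\<close>

definition lin_orders :: "nat \<Rightarrow> (nat \<Rightarrow> nat) set" where
  "lin_orders n = {f \<in> {0..<n} \<rightarrow>\<^sub>E {0..<n}. bij_betw f {0..<n} {0..<n}}"

text \<open>A school choice problem of size n: pref i k = the school ranked k-th
  (0 = most preferred) by student i; prio s j = rank of student j in school s's
  priority (0 = highest priority).\<close>

definition problems :: "nat \<Rightarrow> ((nat \<Rightarrow> nat \<Rightarrow> nat) \<times> (nat \<Rightarrow> nat \<Rightarrow> nat)) set" where
  "problems n = ({0..<n} \<rightarrow>\<^sub>E lin_orders n) \<times> ({0..<n} \<rightarrow>\<^sub>E lin_orders n)"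

text \<open>DA state: r i = number of times student i has been rejected, so she
  currently proposes to pref i (r i) (if r i < n).  One round: every student
  proposes to her current school (a tentatively held student re-proposing to
  the school holding her is equivalent to simply being held); each school keeps
  its highest-priority proposer and rejects the others.\<close>

definition da_step :: "nat \<Rightarrow> (nat \<Rightarrow> nat \<Rightarrow> nat) \<Rightarrow> (nat \<Rightarrow> nat \<Rightarrow> nat) \<Rightarrow> (nat \<Rightarrow> nat) \<Rightarrow> (nat \<Rightarrow> nat)" where
  "da_step n pref prio r = (\<lambda>i.
     if i < n \<and> r i < n \<and>
        (\<exists>j<n. r j < n \<and> pref j (r j) = pref i (r i) \<and>
               prio (pref i (r i)) j < prio (pref i (r i)) i)
     then Suc (r i) else r i)"

definition da_state :: "nat \<Rightarrow> (nat \<Rightarrow> nat \<Rightarrow> nat) \<Rightarrow> (nat \<Rightarrow> nat \<Rightarrow> nat) \<Rightarrow> nat \<Rightarrow> (nat \<Rightarrow> nat)" where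
  "da_state n pref prio t = (da_step n pref prio ^^ t) (\<lambda>_. 0)"

text \<open>Student i applies to school s during DA iff she proposes to s in some round
  (after termination the state is a fixed point, so rounds beyond are harmless).\<close>

definition applies :: "nat \<Rightarrow> (nat \<Rightarrow> nat \<Rightarrow> nat) \<Rightarrow> (nat \<Rightarrow> nat \<Rightarrow> nat) \<Rightarrow> nat \<Rightarrow> nat \<Rightarrow> bool" where
  "applies n pref prio i s \<longleftrightarrow>
     (\<exists>t. da_state n pref prio t i < n \<and> pref i (da_state n pref prio t i) = s)"

definition num_apps :: "nat \<Rightarrow> (nat \<Rightarrow> nat \<Rightarrow> nat) \<Rightarrow> (nat \<Rightarrow> nat \<Rightarrow> nat) \<Rightarrow> nat \<Rightarrow> nat" where
  "num_apps n pref prio i = card {s. applies n pref prio i s}"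

definition prob_problems :: "nat \<Rightarrow> ((nat \<Rightarrow> nat \<Rightarrow> nat) \<Rightarrow> (nat \<Rightarrow> nat \<Rightarrow> nat) \<Rightarrow> bool) \<Rightarrow> real" where
  "prob_problems n E =
     real (card {(pref, prio) \<in> problems n. E pref prio}) / real (card (problems n))"

end

theory Submission
  imports Defs "HOL-Combinatorics.Transposition"
begin

text \<open>Reveal the preference lists only as far as DA reads them. Given everything read
  before a round (all priorities and the read prefixes), the entry a student reads next is
  uniform over the schools not yet in her prefix; if that prefix avoids S1, the new entry
  avoids S1 with probability at most 1 - \<epsilon>, because |S1| \<ge> \<epsilon>n. Hence
  (1 - \<epsilon>)^-A_t, with A_t the number of entries read for the students of I0 before
  round t, times the indicator that none of these entries lies in S1, is a supermartingale
  starting at 1. On the event in question its final value is at least (1 - \<epsilon>)^-Ln,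
  so Markov's inequality gives the bound.\<close>

lemma sum_eq_sum_class_averages:
  fixes f :: "'a \<Rightarrow> real"
  assumes fin: "finite \<Omega>" and self: "\<And>x. x \<in> \<Omega> \<Longrightarrow> x \<in> C x" and sub: "\<And>x. x \<in> \<Omega> \<Longrightarrow> C x \<subseteq> \<Omega>"
    and same: "\<And>x y. x \<in> \<Omega> \<Longrightarrow> y \<in> C x \<Longrightarrow> C y = C x"
  shows "(\<Sum>x\<in>\<Omega>. f x) = (\<Sum>x\<in>\<Omega>. (\<Sum>y\<in>C x. f y) / card (C x))"
proof -
  have "(\<Sum>y\<in>C x. f y) / card (C x) = (\<Sum>y\<in>\<Omega>. if y \<in> C x then f y / card (C y) else 0)"
    if x: "x \<in> \<Omega>" for x
  proof -
    have "(\<Sum>y\<in>C x. f y) / card (C x) = (\<Sum>y\<in>C x. f y / card (C y))"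
      by (simp add: sum_divide_distrib same[OF x])
    also have "\<dots> = (\<Sum>y\<in>\<Omega>. if y \<in> C x then f y / card (C y) else 0)"
      using sub[OF x] fin by (simp add: sum.If_cases Int_absorb1)
    finally show ?thesis .
  qed
  then have "(\<Sum>x\<in>\<Omega>. (\<Sum>y\<in>C x. f y) / card (C x))
      = (\<Sum>x\<in>\<Omega>. \<Sum>y\<in>\<Omega>. if y \<in> C x then f y / card (C y) else 0)"
    by (rule sum.cong[OF refl])
  also have "\<dots> = (\<Sum>y\<in>\<Omega>. \<Sum>x\<in>\<Omega>. if y \<in> C x then f y / card (C y) else 0)"
    by (rule sum.swap)
  also have "\<dots> = (\<Sum>y\<in>\<Omega>. f y)"
  proof (rule sum.cong[OF refl])
    fix y assume y: "y \<in> \<Omega>"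
    have "{x\<in>\<Omega>. y \<in> C x} = C y"
      using sub[OF y] by (auto dest: same intro: self) (metis self[OF y] same[OF y])
    moreover have "card (C y) \<noteq> 0"
      using self[OF y] finite_subset[OF sub[OF y] fin] by auto
    ultimately show "(\<Sum>x\<in>\<Omega>. if y \<in> C x then f y / card (C y) else 0) = f y"
      by (simp add: sum.inter_filter[symmetric, OF fin])
  qed
  finally show ?thesis by (rule sym)
qed

lemma sum_eq_sum_plus_card_increments:
  fixes f g :: "'a \<Rightarrow> nat"
  assumes "finite A" "\<And>a. a \<in> A \<Longrightarrow> f a \<le> g a" "\<And>a. a \<in> A \<Longrightarrow> g a \<le> Suc (f a)"
  shows "sum g A = sum f A + card {a \<in> A. g a \<noteq> f a}"
proof -
  have "g a = f a + (if g a \<noteq> f a then 1 else 0)" if "a \<in> A" for a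
    using assms(2,3)[OF that] by auto
  then have "sum g A = (\<Sum>a\<in>A. f a + (if g a \<noteq> f a then 1 else 0))"
    by (rule sum.cong[OF refl])
  also have "\<dots> = sum f A + card {a \<in> A. g a \<noteq> f a}"
    using assms(1) by (simp add: sum.distrib sum.If_cases Int_def)
  finally show ?thesis .
qed

section \<open>Deferred acceptance\<close>

lemma da_state_0: "da_state n pref prio 0 = (\<lambda>_. 0)"
  by (simp add: da_state_def)

lemma da_state_Suc: "da_state n pref prio (Suc t) = da_step n pref prio (da_state n pref prio t)"
  by (simp add: da_state_def)

lemma da_step_ge: "r i \<le> da_step n pref prio r i"
  by (simp add: da_step_def)

lemma da_step_le_Suc: "da_step n pref prio r i \<le> Suc (r i)"
  by (simp add: da_step_def)

lemma da_state_mono: "s \<le> t \<Longrightarrow> da_state n pref prio s i \<le> da_state n pref prio t i"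
  using lift_Suc_mono_le[of "\<lambda>t. da_state n pref prio t i"] by (metis da_step_ge da_state_Suc)

lemma da_state_le: "da_state n pref prio t i \<le> n"
  by (induction t) (auto simp: da_state_0 da_state_Suc da_step_def)

lemma da_state_intermediate:
  "k \<le> da_state n pref prio t i \<Longrightarrow> \<exists>t'\<le>t. da_state n pref prio t' i = k"
proof (induction t)
  case 0
  then show ?case by (simp add: da_state_0)
next
  case (Suc t)
  show ?case
  proof (cases "k \<le> da_state n pref prio t i")
    case True
    with Suc.IH show ?thesis using le_SucI by blast
  next
    case False
    with Suc.prems da_step_le_Suc[of n pref prio "da_state n pref prio t" i]
    have "da_state n pref prio (Suc t) i = k"
      by (simp add: da_state_Suc)
    then show ?thesis by blast
  qed
qed

lemma da_step_cong:
  assumes "\<And>j. j < n \<Longrightarrow> r j < n \<Longrightarrow> pref' j (r j) = pref j (r j)"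
  shows "da_step n pref' prio r = da_step n pref prio r"
  unfolding da_step_def using assms by (intro ext) (smt (verit))

lemma da_state_cong:
  assumes "\<And>j s. j < n \<Longrightarrow> s < t \<Longrightarrow> da_state n pref prio s j < n \<Longrightarrow>
      pref' j (da_state n pref prio s j) = pref j (da_state n pref prio s j)"
    and "s \<le> t"
  shows "da_state n pref' prio s = da_state n pref prio s"
  using \<open>s \<le> t\<close>
proof (induction s)
  case 0
  then show ?case by (simp add: da_state_0)
next
  case (Suc s)
  then have "da_state n pref' prio s = da_state n pref prio s" by simp
  with Suc.prems assms(1) show ?case
    by (simp add: da_state_Suc) (rule da_step_cong, auto)
qed

lemma eventually_da_state_maximal:
  "eventually (\<lambda>T. \<forall>t. da_state n pref prio t i \<le> da_state n pref prio T i) sequentially"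
proof -
  have fin: "finite (range (\<lambda>t. da_state n pref prio t i))"
    by (rule finite_subset[of _ "{0..n}"]) (auto simp: da_state_le)
  obtain t0 where t0: "da_state n pref prio t0 i = Max (range (\<lambda>t. da_state n pref prio t i))"
    using Max_in[OF fin] by auto
  show ?thesis
    unfolding eventually_sequentially
  proof (intro exI allI impI)
    fix T t assume "t0 \<le> T"
    have "da_state n pref prio t i \<le> da_state n pref prio t0 i" using t0 fin by simp
    also have "\<dots> \<le> da_state n pref prio T i" using \<open>t0 \<le> T\<close> by (rule da_state_mono)
    finally show "da_state n pref prio t i \<le> da_state n pref prio T i" .
  qed
qed

lemma da_terminates_uniformly:
  assumes "finite X"
  shows "\<exists>T. \<forall>(pref, prio)\<in>X. \<forall>i<n. \<forall>t. da_state n pref prio t i \<le> da_state n pref prio T i"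
proof -
  have "eventually (\<lambda>T. \<forall>(pref, prio)\<in>X. \<forall>i\<in>{..<n}.
      \<forall>t. da_state n pref prio t i \<le> da_state n pref prio T i) sequentially"
    using assms by (auto intro!: eventually_ball_finite simp: eventually_da_state_maximal)
  then show ?thesis
    unfolding eventually_sequentially by blast
qed

section \<open>Prefixes of uniformly random linear orders\<close>

lemma finite_lin_orders: "finite (lin_orders n)"
  unfolding lin_orders_def by (rule finite_subset[of _ "{0..<n} \<rightarrow>\<^sub>E {0..<n}"]) (auto intro: finite_PiE)

lemma finite_problems: "finite (problems n)"
  unfolding problems_def using finite_lin_orders by (auto intro!: finite_PiE)

definition prefix_cylinder :: "nat \<Rightarrow> (nat \<Rightarrow> nat) \<Rightarrow> nat \<Rightarrow> (nat \<Rightarrow> nat) set" where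
  "prefix_cylinder n \<pi>0 k = {\<pi> \<in> lin_orders n. \<forall>k'<k. \<pi> k' = \<pi>0 k'}"

lemma finite_prefix_cylinder: "finite (prefix_cylinder n \<pi>0 k)"
  using finite_lin_orders by (simp add: prefix_cylinder_def)

lemma prefix_cylinder_next_unused:
  assumes "\<pi> \<in> prefix_cylinder n \<pi>0 k" "k < n"
  shows "\<pi> k \<in> {0..<n} - \<pi>0 ` {..<k}"
proof -
  have bij: "bij_betw \<pi> {0..<n} {0..<n}" using assms(1) by (simp add: prefix_cylinder_def lin_orders_def)
  have "\<pi> k \<noteq> \<pi> k'" if "k' < k" for k'
    using that assms(2) bij_betw_imp_inj_on[OF bij] by (auto dest: inj_onD)
  then have "\<pi> k \<noteq> \<pi>0 k'" if "k' < k" for k'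
    using that assms(1) by (auto simp: prefix_cylinder_def)
  then show ?thesis using bij assms(2) by (auto simp: bij_betw_def)
qed

lemma card_unused_values:
  assumes "\<pi>0 \<in> lin_orders n" "k \<le> n"
  shows "card ({0..<n} - \<pi>0 ` {..<k}) = n - k"
proof -
  have "inj_on \<pi>0 {..<k}"
    using assms by (auto simp: lin_orders_def bij_betw_def intro: inj_on_subset)
  then have "card (\<pi>0 ` {..<k}) = k" by (simp add: card_image)
  moreover have "\<pi>0 ` {..<k} \<subseteq> {0..<n}" using assms by (auto simp: lin_orders_def PiE_iff)
  ultimately show ?thesis by (simp add: card_Diff_subset finite_subset)
qed

text \<open>Composing with the transposition of two unused values maps the extensions
  with next value v injectively onto those with next value w.\<close>

lemma card_prefix_cylinder_next_le:
  assumes "k < n" "v < n" "w < n" "v \<notin> \<pi>0 ` {..<k}" "w \<notin> \<pi>0 ` {..<k}"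
  shows "card {\<pi> \<in> prefix_cylinder n \<pi>0 k. \<pi> k = v} \<le> card {\<pi> \<in> prefix_cylinder n \<pi>0 k. \<pi> k = w}"
proof (rule card_inj_on_le)
  define f where "f \<pi> = restrict (transpose v w \<circ> \<pi>) {0..<n}" for \<pi>
  show "inj_on f {\<pi> \<in> prefix_cylinder n \<pi>0 k. \<pi> k = v}"
  proof (rule inj_onI, rule ext)
    fix a b y
    assume a: "a \<in> {\<pi> \<in> prefix_cylinder n \<pi>0 k. \<pi> k = v}"
      and b: "b \<in> {\<pi> \<in> prefix_cylinder n \<pi>0 k. \<pi> k = v}" and "f a = f b"
    show "a y = b y"
    proof (cases "y < n")
      case True
      then have "transpose v w (a y) = transpose v w (b y)"
        using fun_cong[OF \<open>f a = f b\<close>, of y] by (simp add: f_def)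
      then show ?thesis by (rule transpose_eq_imp_eq)
    next
      case False
      then show ?thesis using a b by (auto simp: prefix_cylinder_def lin_orders_def PiE_def extensional_def)
    qed
  qed
  show "f ` {\<pi> \<in> prefix_cylinder n \<pi>0 k. \<pi> k = v} \<subseteq> {\<pi> \<in> prefix_cylinder n \<pi>0 k. \<pi> k = w}"
  proof (rule image_subsetI)
    fix \<pi> assume "\<pi> \<in> {\<pi> \<in> prefix_cylinder n \<pi>0 k. \<pi> k = v}"
    then have \<pi>: "\<pi> \<in> prefix_cylinder n \<pi>0 k" "\<pi> k = v" by simp_all
    have "bij_betw (transpose v w \<circ> \<pi>) {0..<n} {0..<n}"
      using \<pi> assms(2,3) by (intro bij_betw_trans[of _ _ "{0..<n}"]) (auto simp: prefix_cylinder_def lin_orders_def)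
    then have "bij_betw (f \<pi>) {0..<n} {0..<n}"
      unfolding f_def by (rule bij_betw_cong[THEN iffD1, rotated]) simp
    moreover have "f \<pi> \<in> {0..<n} \<rightarrow>\<^sub>E {0..<n}"
      using \<pi> assms(2,3) by (auto simp: f_def transpose_def prefix_cylinder_def lin_orders_def PiE_iff)
    moreover have "f \<pi> k' = \<pi>0 k'" if "k' < k" for k'
    proof -
      have "\<pi>0 k' \<noteq> v" "\<pi>0 k' \<noteq> w" using assms(4,5) that by auto
      then show ?thesis using \<pi> assms(1) that by (simp add: f_def prefix_cylinder_def)
    qed
    ultimately show "f \<pi> \<in> {\<pi> \<in> prefix_cylinder n \<pi>0 k. \<pi> k = w}"
      using \<pi> assms(1) by (simp add: f_def prefix_cylinder_def lin_orders_def)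
  qed
  show "finite {\<pi> \<in> prefix_cylinder n \<pi>0 k. \<pi> k = w}"
    using finite_prefix_cylinder by simp
qed

lemma card_prefix_cylinder_next_in:
  assumes "\<pi>0 \<in> lin_orders n" "k < n" "A \<subseteq> {0..<n} - \<pi>0 ` {..<k}"
  shows "card {\<pi> \<in> prefix_cylinder n \<pi>0 k. \<pi> k \<in> A} * (n - k) = card A * card (prefix_cylinder n \<pi>0 k)"
proof -
  define F where "F = {0..<n} - \<pi>0 ` {..<k}"
  define B where "B v = {\<pi> \<in> prefix_cylinder n \<pi>0 k. \<pi> k = v}" for v
  have card_F: "card F = n - k"
    using card_unused_values[OF assms(1)] assms(2) by (simp add: F_def)
  then obtain w where w: "w \<in> F" using assms(2) by fastforce
  have card_B: "card (B v) = card (B w)" if "v \<in> F" for v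
    using card_prefix_cylinder_next_le[OF assms(2), of v w \<pi>0]
      card_prefix_cylinder_next_le[OF assms(2), of w v \<pi>0] that w
    by (auto simp: F_def B_def)
  have card_UN: "card (\<Union>v\<in>V. B v) = card V * card (B w)" if "V \<subseteq> F" for V
  proof -
    have "card (\<Union>v\<in>V. B v) = (\<Sum>v\<in>V. card (B v))"
      using finite_subset[OF that] finite_prefix_cylinder
      by (intro card_UN_disjoint) (auto simp: B_def F_def)
    also have "\<dots> = card V * card (B w)"
      using that card_B by (simp add: subset_iff)
    finally show ?thesis .
  qed
  have "{\<pi> \<in> prefix_cylinder n \<pi>0 k. \<pi> k \<in> A} = (\<Union>v\<in>A. B v)"
    by (auto simp: B_def)
  moreover have "prefix_cylinder n \<pi>0 k = (\<Union>v\<in>F. B v)"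
    using prefix_cylinder_next_unused[OF _ assms(2)] by (auto simp: B_def F_def)
  ultimately show ?thesis
    using card_UN[of A] card_UN[of F] assms(3) card_F by (simp add: F_def)
qed

text \<open>The next entry is uniform over the n - k unused values, and all of S is unused.\<close>

lemma card_prefix_cylinder_next_notin_le:
  fixes \<epsilon> :: real
  assumes "\<pi>0 \<in> lin_orders n" "k < n" "\<forall>k'<k. \<pi>0 k' \<notin> S"
    and "S \<subseteq> {0..<n}" "\<epsilon> * real n \<le> real (card S)" "0 \<le> \<epsilon>"
  shows "real (card {\<pi> \<in> prefix_cylinder n \<pi>0 k. \<pi> k \<notin> S})
      \<le> (1 - \<epsilon>) * real (card (prefix_cylinder n \<pi>0 k))"
proof -
  define F where "F = {0..<n} - \<pi>0 ` {..<k}"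
  define N where "N = card (prefix_cylinder n \<pi>0 k)"
  have S_F: "S \<subseteq> F" using assms(3,4) by (auto simp: F_def)
  have card_F_S: "card (F - S) = n - k - card S"
    using card_unused_values[OF assms(1)] assms(2) S_F
    by (simp add: F_def card_Diff_subset finite_subset)
  have frac: "real (n - k - card S) \<le> (1 - \<epsilon>) * real (n - k)"
  proof -
    have "card S \<le> n - k"
      using card_mono[OF _ S_F] card_unused_values[OF assms(1)] assms(2) by (simp add: F_def)
    moreover have "\<epsilon> * real (n - k) \<le> \<epsilon> * real n" using assms(6) by (intro mult_left_mono) auto
    ultimately show ?thesis using assms(5) by (simp add: of_nat_diff algebra_simps)
  qed
  have "{\<pi> \<in> prefix_cylinder n \<pi>0 k. \<pi> k \<notin> S} = {\<pi> \<in> prefix_cylinder n \<pi>0 k. \<pi> k \<in> F - S}"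
    using prefix_cylinder_next_unused[OF _ assms(2)] by (auto simp: F_def)
  then have "real (card {\<pi> \<in> prefix_cylinder n \<pi>0 k. \<pi> k \<notin> S}) * real (n - k)
      = real (n - k - card S) * real N"
    using card_prefix_cylinder_next_in[OF assms(1,2), of "F - S"] card_F_S
    by (simp add: F_def N_def flip: of_nat_mult)
  also have "\<dots> \<le> (1 - \<epsilon>) * real N * real (n - k)"
    using mult_right_mono[OF frac, of "real N"] by (simp add: mult_ac)
  finally show ?thesis
    using assms(2) by (simp add: N_def)
qed

section \<open>Information revealed by deferred acceptance\<close>

type_synonym profile = "(nat \<Rightarrow> nat \<Rightarrow> nat) \<times> (nat \<Rightarrow> nat \<Rightarrow> nat)"

text \<open>The length of the prefix of j's preference list that DA has read in the rounds
  before round t.\<close>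

definition revealed :: "nat \<Rightarrow> profile \<Rightarrow> nat \<Rightarrow> nat \<Rightarrow> nat" where
  "revealed n x t j =
     (case t of 0 \<Rightarrow> 0 | Suc t' \<Rightarrow> min (Suc (da_state n (fst x) (snd x) t' j)) n)"

text \<open>The profiles that DA cannot tell apart from x before round t; these are the
  atoms of the filtration along which the potential below is a supermartingale.\<close>

definition history_class :: "nat \<Rightarrow> nat \<Rightarrow> profile \<Rightarrow> profile set" where
  "history_class n t x =
     {y \<in> problems n. snd y = snd x \<and> (\<forall>j<n. \<forall>k<revealed n x t j. fst y j k = fst x j k)}"

lemma revealed_le_Suc: "revealed n x t j \<le> revealed n x (Suc t) j"
proof (cases t)
  case (Suc t')
  then show ?thesis
    using da_state_mono[of t' "Suc t'" n "fst x" "snd x" j] by (simp add: revealed_def)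
qed (simp add: revealed_def)

lemma revealed_Suc_le: "revealed n x (Suc t) j \<le> Suc (revealed n x t j)"
proof (cases t)
  case (Suc t')
  then show ?thesis
    using da_step_le_Suc[of n "fst x" "snd x" "da_state n (fst x) (snd x) t'" j]
    by (simp add: revealed_def da_state_Suc)
qed (simp add: revealed_def da_state_0)

lemma revealed_le: "revealed n x t j \<le> n"
  by (cases t) (auto simp: revealed_def)

lemma da_state_history_class:
  assumes "y \<in> history_class n t x" "s \<le> t"
  shows "da_state n (fst y) (snd y) s = da_state n (fst x) (snd x) s"
proof -
  have "da_state n (fst y) (snd x) s = da_state n (fst x) (snd x) s"
  proof (rule da_state_cong[OF _ assms(2)])
    fix j s' assume j: "j < n" and "s' < t" and lt: "da_state n (fst x) (snd x) s' j < n"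
    then obtain t' where t: "t = Suc t'" "s' \<le> t'" by (cases t) auto
    then have "da_state n (fst x) (snd x) s' j < revealed n x t j"
      using lt da_state_mono[OF t(2)] by (simp add: revealed_def le_imp_less_Suc)
    then show "fst y j (da_state n (fst x) (snd x) s' j) = fst x j (da_state n (fst x) (snd x) s' j)"
      using assms(1) j by (simp add: history_class_def)
  qed
  then show ?thesis using assms(1) by (simp add: history_class_def)
qed

lemma revealed_history_class:
  assumes "y \<in> history_class n t x"
  shows "revealed n y t = revealed n x t" "revealed n y (Suc t) = revealed n x (Suc t)"
  using da_state_history_class[OF assms]
  by (auto intro!: ext simp: revealed_def split: nat.split)

lemma history_class_eq:
  assumes "y \<in> history_class n t x"
  shows "history_class n t y = history_class n t x"
  using assms revealed_history_class(1)[OF assms] unfolding history_class_def by auto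

lemma history_class_refl: "x \<in> problems n \<Longrightarrow> x \<in> history_class n t x"
  by (simp add: history_class_def)

lemma history_class_PiE:
  assumes "x \<in> problems n"
  shows "history_class n t x =
    (PiE {0..<n} (\<lambda>j. prefix_cylinder n (fst x j) (revealed n x t j))) \<times> {snd x}"
  using assms unfolding history_class_def problems_def prefix_cylinder_def by (auto simp: PiE_iff)

lemma card_history_class_next_notin_le:
  fixes \<epsilon> :: real
  assumes x: "x \<in> problems n" and J: "J \<subseteq> {0..<n}"
    and unread: "\<And>i. i \<in> J \<Longrightarrow> revealed n x t i < n"
    and avoid: "\<And>i k. i \<in> J \<Longrightarrow> k < revealed n x t i \<Longrightarrow> fst x i k \<notin> S"
    and S: "S \<subseteq> {0..<n}" "\<epsilon> * real n \<le> real (card S)" "0 \<le> \<epsilon>"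
  shows "real (card {y \<in> history_class n t x. \<forall>i\<in>J. fst y i (revealed n x t i) \<notin> S})
      \<le> (1 - \<epsilon>) ^ card J * real (card (history_class n t x))"
proof -
  define Z where "Z j = prefix_cylinder n (fst x j) (revealed n x t j)" for j
  define Z' where "Z' j = (if j \<in> J then {\<pi> \<in> Z j. \<pi> (revealed n x t j) \<notin> S} else Z j)" for j
  have "{y \<in> history_class n t x. \<forall>i\<in>J. fst y i (revealed n x t i) \<notin> S} = PiE {0..<n} Z' \<times> {snd x}"
  proof -
    have "{p \<in> PiE {0..<n} Z. \<forall>i\<in>J. p i (revealed n x t i) \<notin> S} = PiE {0..<n} Z'"
      using J by (auto simp: Z'_def PiE_def Pi_def extensional_def subset_iff split: if_splits)
    moreover have "{y \<in> PiE {0..<n} Z \<times> {snd x}. \<forall>i\<in>J. fst y i (revealed n x t i) \<notin> S}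
        = {p \<in> PiE {0..<n} Z. \<forall>i\<in>J. p i (revealed n x t i) \<notin> S} \<times> {snd x}"
      by auto
    ultimately show ?thesis
      unfolding history_class_PiE[OF x] Z_def by simp
  qed
  then have card_G: "card {y \<in> history_class n t x. \<forall>i\<in>J. fst y i (revealed n x t i) \<notin> S}
      = (\<Prod>j\<in>{0..<n}. card (Z' j))"
    by (simp add: card_cartesian_product card_PiE)
  have card_class: "card (history_class n t x) = (\<Prod>j\<in>{0..<n}. card (Z j))"
    unfolding history_class_PiE[OF x] Z_def by (simp add: card_cartesian_product card_PiE)
  have "real (card (Z' j)) \<le> (if j \<in> J then 1 - \<epsilon> else 1) * real (card (Z j))" if "j < n" for j
  proof (cases "j \<in> J")
    case True
    have "fst x j \<in> lin_orders n" using x that by (auto simp: problems_def PiE_iff)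
    then show ?thesis
      using card_prefix_cylinder_next_notin_le[OF _ unread[OF True] _ S] avoid[OF True] True
      by (simp add: Z'_def Z_def)
  qed (simp add: Z'_def)
  then have "real (\<Prod>j\<in>{0..<n}. card (Z' j))
      \<le> (\<Prod>j\<in>{0..<n}. (if j \<in> J then 1 - \<epsilon> else 1) * real (card (Z j)))"
    unfolding of_nat_prod by (intro prod_mono) auto
  also have "\<dots> = (1 - \<epsilon>) ^ card J * (\<Prod>j\<in>{0..<n}. real (card (Z j)))"
    using J by (simp add: prod.distrib prod.If_cases Int_absorb1)
  finally show ?thesis
    unfolding card_G card_class by simp
qed

section \<open>A supermartingale\<close>

definition avoids_until :: "nat set \<Rightarrow> nat set \<Rightarrow> nat \<Rightarrow> nat \<Rightarrow> profile \<Rightarrow> bool" where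
  "avoids_until I S n t x \<longleftrightarrow> (\<forall>i\<in>I. \<forall>k<revealed n x t i. fst x i k \<notin> S)"

definition potential :: "nat set \<Rightarrow> nat set \<Rightarrow> real \<Rightarrow> nat \<Rightarrow> nat \<Rightarrow> profile \<Rightarrow> real" where
  "potential I S c n t x = (if avoids_until I S n t x then c ^ (\<Sum>i\<in>I. revealed n x t i) else 0)"

lemma avoids_until_history_class:
  assumes "y \<in> history_class n t x" "I \<subseteq> {0..<n}"
  shows "avoids_until I S n t y \<longleftrightarrow> avoids_until I S n t x"
  using assms revealed_history_class(1)[OF assms(1)]
  by (auto simp: avoids_until_def history_class_def subset_iff)

lemma avoids_until_Suc_iff:
  assumes y: "y \<in> history_class n t x" and I: "I \<subseteq> {0..<n}"
  shows "avoids_until I S n (Suc t) y \<longleftrightarrow> avoids_until I S n t x \<and>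
    (\<forall>i\<in>I. revealed n x (Suc t) i \<noteq> revealed n x t i \<longrightarrow> fst y i (revealed n x t i) \<notin> S)"
proof -
  have "k < revealed n x (Suc t) i \<longleftrightarrow>
      k < revealed n x t i \<or> (revealed n x (Suc t) i \<noteq> revealed n x t i \<and> k = revealed n x t i)" for i k
    using revealed_le_Suc[of n x t i] revealed_Suc_le[of n x t i] by auto
  then have "avoids_until I S n (Suc t) y \<longleftrightarrow> avoids_until I S n t y \<and>
    (\<forall>i\<in>I. revealed n x (Suc t) i \<noteq> revealed n x t i \<longrightarrow> fst y i (revealed n x t i) \<notin> S)"
    unfolding avoids_until_def revealed_history_class[OF y] by blast
  then show ?thesis
    using avoids_until_history_class[OF assms] by simp
qed

text \<open>Given the history, the entries read in round t by the students of I are independent,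
  and each avoids S with probability at most 1 - \<epsilon>.\<close>

lemma sum_potential_Suc_history_class_le:
  fixes \<epsilon> c :: real
  assumes x: "x \<in> problems n" and I: "I \<subseteq> {0..<n}"
    and S: "S \<subseteq> {0..<n}" "\<epsilon> * real n \<le> real (card S)" "0 \<le> \<epsilon>" "\<epsilon> \<le> 1"
    and c: "0 \<le> c" "c * (1 - \<epsilon>) \<le> 1"
  shows "(\<Sum>y\<in>history_class n t x. potential I S c n (Suc t) y)
      \<le> (\<Sum>y\<in>history_class n t x. potential I S c n t y)"
proof -
  define Q where "Q = revealed n x t"
  define J where "J = {i \<in> I. revealed n x (Suc t) i \<noteq> Q i}"
  define G where "G = {y \<in> history_class n t x. \<forall>i\<in>J. fst y i (Q i) \<notin> S}"
  have fin_class: "finite (history_class n t x)"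
    using finite_problems by (rule finite_subset[rotated]) (auto simp: history_class_def)
  have RHS: "(\<Sum>y\<in>history_class n t x. potential I S c n t y) = real (card (history_class n t x)) * potential I S c n t x"
    using avoids_until_history_class[OF _ I] revealed_history_class(1) by (simp add: potential_def)
  show ?thesis
  proof (cases "avoids_until I S n t x")
    case False
    then show ?thesis
      unfolding RHS using avoids_until_Suc_iff[OF _ I] by (simp add: potential_def)
  next
    case True
    have sum_Q': "(\<Sum>i\<in>I. revealed n x (Suc t) i) = (\<Sum>i\<in>I. Q i) + card J"
      unfolding Q_def J_def using finite_subset[OF I]
      by (intro sum_eq_sum_plus_card_increments revealed_le_Suc revealed_Suc_le) auto
    have "(\<Sum>y\<in>history_class n t x. potential I S c n (Suc t) y)
        = (\<Sum>y\<in>history_class n t x. if y \<in> G then c ^ ((\<Sum>i\<in>I. Q i) + card J) else 0)"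
      using True avoids_until_Suc_iff[OF _ I] revealed_history_class(2)
      by (intro sum.cong) (auto simp: potential_def G_def J_def Q_def sum_Q')
    also have "\<dots> = c ^ (\<Sum>i\<in>I. Q i) * (c ^ card J * real (card G))"
      using fin_class by (simp add: sum.If_cases G_def Int_def power_add)
    also have "\<dots> \<le> c ^ (\<Sum>i\<in>I. Q i) * (c ^ card J * ((1 - \<epsilon>) ^ card J * real (card (history_class n t x))))"
    proof (intro mult_left_mono)
      show "real (card G) \<le> (1 - \<epsilon>) ^ card J * real (card (history_class n t x))"
        unfolding G_def Q_def
      proof (rule card_history_class_next_notin_le[OF x _ _ _ S(1-3)])
        show "J \<subseteq> {0..<n}" using I by (auto simp: J_def)
        show "revealed n x t i < n" if "i \<in> J" for i
          using that revealed_le[of n x "Suc t" i] revealed_le_Suc[of n x t i] by (auto simp: J_def Q_def)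
        show "fst x i k \<notin> S" if "i \<in> J" "k < revealed n x t i" for i k
          using that True by (auto simp: J_def avoids_until_def)
      qed
    qed (use c in auto)
    also have "\<dots> \<le> c ^ (\<Sum>i\<in>I. Q i) * real (card (history_class n t x))"
    proof -
      have "c ^ card J * (1 - \<epsilon>) ^ card J \<le> 1"
        using c S(4) by (simp add: power_mult_distrib[symmetric] power_le_one)
      from mult_left_le[OF this, of "c ^ (\<Sum>i\<in>I. Q i) * real (card (history_class n t x))"]
      show ?thesis using c by (simp add: mult_ac)
    qed
    finally show ?thesis
      unfolding RHS using True by (simp add: potential_def Q_def mult.commute)
  qed
qed

lemma sum_potential_le_card_problems:
  fixes \<epsilon> c :: real
  assumes I: "I \<subseteq> {0..<n}"
    and S: "S \<subseteq> {0..<n}" "\<epsilon> * real n \<le> real (card S)" "0 \<le> \<epsilon>" "\<epsilon> \<le> 1"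
    and c: "0 \<le> c" "c * (1 - \<epsilon>) \<le> 1"
  shows "(\<Sum>x\<in>problems n. potential I S c n t x) \<le> real (card (problems n))"
proof (induction t)
  case 0
  then show ?case by (simp add: potential_def avoids_until_def revealed_def)
next
  case (Suc t)
  have averages: "(\<Sum>x\<in>problems n. f x)
      = (\<Sum>x\<in>problems n. (\<Sum>y\<in>history_class n t x. f y) / card (history_class n t x))" for f
    by (rule sum_eq_sum_class_averages[OF finite_problems])
      (auto simp: history_class_refl history_class_eq, auto simp: history_class_def)
  have "(\<Sum>x\<in>problems n. potential I S c n (Suc t) x) \<le> (\<Sum>x\<in>problems n. potential I S c n t x)"
    unfolding averages[of "potential I S c n (Suc t)"] averages[of "potential I S c n t"]
    by (intro sum_mono divide_right_mono sum_potential_Suc_history_class_le[OF _ I S c]) auto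
  with Suc.IH show ?case by linarith
qed


lemma num_apps_le_revealed:
  assumes "\<forall>t. da_state n (fst x) (snd x) t i \<le> da_state n (fst x) (snd x) T i"
  shows "num_apps n (fst x) (snd x) i \<le> revealed n x (Suc T) i"
proof -
  have "{s. applies n (fst x) (snd x) i s} \<subseteq> fst x i ` {..<revealed n x (Suc T) i}"
  proof
    fix s assume "s \<in> {s. applies n (fst x) (snd x) i s}"
    then obtain t where t: "da_state n (fst x) (snd x) t i < n" "fst x i (da_state n (fst x) (snd x) t i) = s"
      by (auto simp: applies_def)
    moreover have "da_state n (fst x) (snd x) t i < revealed n x (Suc T) i"
      using t(1) assms by (simp add: revealed_def le_imp_less_Suc)
    ultimately show "s \<in> fst x i ` {..<revealed n x (Suc T) i}" by blast
  qed
  then have "num_apps n (fst x) (snd x) i \<le> card (fst x i ` {..<revealed n x (Suc T) i})"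
    unfolding num_apps_def by (intro card_mono) auto
  also have "\<dots> \<le> revealed n x (Suc T) i"
    using card_image_le[of "{..<revealed n x (Suc T) i}" "fst x i"] by simp
  finally show ?thesis .
qed

lemma avoids_until_if_never_applies:
  assumes "\<forall>i\<in>I. \<forall>s\<in>S. \<not> applies n (fst x) (snd x) i s"
  shows "avoids_until I S n t x"
  unfolding avoids_until_def
proof (intro ballI allI impI)
  fix i k assume i: "i \<in> I" and k: "k < revealed n x t i"
  have "k < n" using k revealed_le[of n x t i] by simp
  obtain t' where "k \<le> da_state n (fst x) (snd x) t' i"
    using k by (cases t) (auto simp: revealed_def less_Suc_eq_le)
  then obtain t'' where "da_state n (fst x) (snd x) t'' i = k"
    using da_state_intermediate by blast
  with \<open>k < n\<close> have "applies n (fst x) (snd x) i (fst x i k)"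
    by (auto simp: applies_def)
  then show "fst x i k \<notin> S" using assms i by blast
qed

lemma powr_le_potential_if_event:
  fixes a c :: real
  assumes T: "\<forall>i\<in>I. \<forall>t. da_state n (fst x) (snd x) t i \<le> da_state n (fst x) (snd x) T i"
    and apps: "a \<le> real (\<Sum>i\<in>I. num_apps n (fst x) (snd x) i)"
    and never: "\<forall>i\<in>I. \<forall>s\<in>S. \<not> applies n (fst x) (snd x) i s"
    and c: "1 \<le> c"
  shows "c powr a \<le> potential I S c n (Suc T) x"
proof -
  have "(\<Sum>i\<in>I. num_apps n (fst x) (snd x) i) \<le> (\<Sum>i\<in>I. revealed n x (Suc T) i)"
    using T by (intro sum_mono num_apps_le_revealed) auto
  with apps have "a \<le> real (\<Sum>i\<in>I. revealed n x (Suc T) i)"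
    by (simp add: of_nat_mono order_trans del: of_nat_sum)
  then have "c powr a \<le> c powr real (\<Sum>i\<in>I. revealed n x (Suc T) i)"
    using c by (intro powr_mono) auto
  also have "\<dots> = potential I S c n (Suc T) x"
    using avoids_until_if_never_applies[OF never] c
    by (simp add: potential_def powr_realpow del: of_nat_sum)
  finally show ?thesis .
qed

theorem lemma2:
  fixes n :: nat and \<epsilon> L :: real and I0 S1 :: "nat set"
  assumes "0 < \<epsilon>" "\<epsilon> < 1" "0 < L"
    and "I0 \<subseteq> {0..<n}" "S1 \<subseteq> {0..<n}"
    and "real (card I0) \<ge> \<epsilon> * real n" "real (card S1) \<ge> \<epsilon> * real n"
  shows "prob_problems n (\<lambda>pref prio.
            real (\<Sum>i\<in>I0. num_apps n pref prio i) \<ge> L * real n \<and>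
            (\<forall>i\<in>I0. \<forall>s\<in>S1. \<not> applies n pref prio i s))
         \<le> (1 - \<epsilon>) powr (L * real n)"
proof -
  define c where "c = 1 / (1 - \<epsilon>)"
  define E where "E = {(pref, prio) \<in> problems n. real (\<Sum>i\<in>I0. num_apps n pref prio i) \<ge> L * real n \<and>
    (\<forall>i\<in>I0. \<forall>s\<in>S1. \<not> applies n pref prio i s)}"
  obtain T where T: "\<forall>(pref, prio)\<in>problems n. \<forall>i<n. \<forall>t. da_state n pref prio t i \<le> da_state n pref prio T i"
    using da_terminates_uniformly[OF finite_problems] by blast
  have c: "1 \<le> c" "c * (1 - \<epsilon>) \<le> 1" using assms(1,2) by (simp_all add: c_def)
  have "real (card E) * c powr (L * real n) = (\<Sum>x\<in>E. c powr (L * real n))" by simp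
  also have "\<dots> \<le> (\<Sum>x\<in>E. potential I0 S1 c n (Suc T) x)"
    using T assms(4) c(1) by (intro sum_mono powr_le_potential_if_event) (auto simp: E_def subset_iff)
  also have "\<dots> \<le> (\<Sum>x\<in>problems n. potential I0 S1 c n (Suc T) x)"
    using finite_problems c(1) by (intro sum_mono2) (auto simp: E_def potential_def)
  also have "\<dots> \<le> real (card (problems n))"
    using assms c by (intro sum_potential_le_card_problems) auto
  finally have "real (card E) \<le> real (card (problems n)) * (1 - \<epsilon>) powr (L * real n)"
    using assms(1,2) by (simp add: c_def powr_divide divide_simps)
  then show ?thesis
    by (simp add: prob_problems_def E_def divide_le_eq mult.commute)
qed

end
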